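(* Let $(X,d)$ be a metric space and let $\tilde x=(x_n)$, $\tilde y=(y_n)$ be statistically equivalent sequences of points of $X$. Let $K\subseteq\mathbb N$ be an infinite set with $\liminf_{n\to\infty}\frac{|K(n)|}{n}>0$, where $K(n)=\{k\in K: k\le n\}$, and let $\tilde x'=(x_{n(k)})$ and $\tilde y'=(y_{n(k)})$ be the subsequences of $\tilde x$ and $\tilde y$ with $\{n(k):k\in\mathbb N\}=K$ ($(n(k))$ strictly increasing). Then $\tilde x'$ and $\tilde y'$ are statistically equivalent.
   Context: A set $M\subseteq\mathbb N$ is statistical dense if $\lim_{n\to\infty}|\{m\in M:m\le n\}|/n=1$. Sequences $(u_k),(v_k)$ are statistically equivalent if there is a statistical dense $M\subseteq\mathbb N$ with $u_k=v_k$ for all $k\in M$; subsequences $(x_{n(k)})_k$ are regarded as sequences indexed by $k$. *)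

theory Defs
  imports "HOL-Analysis.Analysis"
begin

definition count_upto :: "nat set \<Rightarrow> nat \<Rightarrow> nat set" where
  "count_upto K n = {k \<in> K. k \<le> n}"

definition stat_dense :: "nat set \<Rightarrow> bool" where
  "stat_dense M \<longleftrightarrow> (\<lambda>n. real (card (count_upto M n)) / real n) \<longlonglongrightarrow> 1"

definition stat_equiv :: "(nat \<Rightarrow> 'a) \<Rightarrow> (nat \<Rightarrow> 'a) \<Rightarrow> bool" where
  "stat_equiv u v \<longleftrightarrow> (\<exists>M. stat_dense M \<and> (\<forall>k\<in>M. u k = v k))"

end

theory Submission
  imports Defs
begin

text \<open>The subsequences can differ only at indices \<open>k\<close> for which \<open>n k\<close> lies in the exceptional
  set \<open>E\<close> of \<open>x\<close> and \<open>y\<close>, which has density zero. Up to \<open>N\<close> there are at most \<open>|E(n N)| = o(n N)\<close>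
  such indices. Since \<open>K(n N)\<close> has exactly \<open>N + 1\<close> elements and \<open>K\<close> has lower density above
  some \<open>c > 0\<close>, eventually \<open>n N < (N + 1) / c\<close>, so their number is \<open>o(N)\<close>.\<close>

lemma card_count_upto_add_Compl:
  "card (count_upto M m) + card (count_upto (-M) m) = Suc m"
proof -
  have "count_upto M m \<union> count_upto (-M) m = {..m}"
    and "count_upto M m \<inter> count_upto (-M) m = {}"
    and "finite (count_upto M m)" and "finite (count_upto (-M) m)"
    by (auto simp: count_upto_def)
  then show ?thesis by (metis card_Un_disjoint card_atMost)
qed

lemma stat_dense_iff_Compl_density_zero:
  "stat_dense M \<longleftrightarrow> (\<lambda>m. real (card (count_upto (-M) m)) / real m) \<longlonglongrightarrow> 0"
proof -
  let ?d = "\<lambda>m. real (card (count_upto (-M) m)) / real m"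
  have split: "real (card (count_upto M m)) / real m = real (Suc m) / real m - ?d m" for m
    using card_count_upto_add_Compl[of M m]
    by (simp add: diff_divide_distrib[symmetric] flip: of_nat_add)
  have "(\<lambda>m. real (Suc m) / real m - ?d m) \<longlonglongrightarrow> 1 \<longleftrightarrow> ?d \<longlonglongrightarrow> 0"
  proof
    assume "(\<lambda>m. real (Suc m) / real m - ?d m) \<longlonglongrightarrow> 1"
    from tendsto_diff[OF LIMSEQ_Suc_n_over_n this] show "?d \<longlonglongrightarrow> 0"
      by simp
  next
    assume "?d \<longlonglongrightarrow> 0"
    from tendsto_diff[OF LIMSEQ_Suc_n_over_n this]
    show "(\<lambda>m. real (Suc m) / real m - ?d m) \<longlonglongrightarrow> 1"
      by simp
  qed
  then show ?thesis
    unfolding stat_dense_def split .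
qed

lemma card_count_upto_range_at:
  assumes "strict_mono n"
  shows "card (count_upto (range n) (n N)) = Suc N"
proof -
  have "count_upto (range n) (n N) = n ` {..N}"
    using assms by (auto simp: count_upto_def strict_mono_less_eq)
  moreover have "inj_on n {..N}"
    using assms strict_mono_imp_inj_on by blast
  ultimately show ?thesis by (simp add: card_image)
qed

lemma card_count_upto_vimage_le:
  assumes "strict_mono n"
  shows "card (count_upto (n -` A) N) \<le> card (count_upto A (n N))"
proof -
  have "n ` count_upto (n -` A) N \<subseteq> count_upto A (n N)"
    using assms by (auto simp: count_upto_def strict_mono_less_eq)
  moreover have "inj_on n (count_upto (n -` A) N)"
    using assms strict_mono_imp_inj_on by blast
  moreover have "finite (count_upto A (n N))"
    by (simp add: count_upto_def)
  ultimately show ?thesis by (metis card_image card_mono)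
qed

lemma liminf_pos_imp_eventually_gt:
  fixes f :: "nat \<Rightarrow> real"
  assumes "liminf (\<lambda>m. ereal (f m)) > 0"
  obtains c where "c > 0" and "eventually (\<lambda>m. c < f m) sequentially"
proof -
  obtain z where z: "0 < z" "z < liminf (\<lambda>m. ereal (f m))"
    using assms dense by blast
  define c where "c = real_of_ereal z"
  have z_eq: "z = ereal c"
    using z unfolding c_def by (cases z) auto
  show ?thesis
  proof
    show "c > 0" using z(1) z_eq by simp
    show "eventually (\<lambda>m. c < f m) sequentially"
      using less_LiminfD[OF z(2)] z_eq by simp
  qed
qed

lemma density_zero_vimage:
  fixes E :: "nat set" and n :: "nat \<Rightarrow> nat"
  assumes E: "(\<lambda>m. real (card (count_upto E m)) / real m) \<longlonglongrightarrow> 0"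
    and n: "strict_mono n"
    and c: "c > 0" "eventually (\<lambda>m. c < real (card (count_upto (range n) m)) / real m) sequentially"
  shows "(\<lambda>N. real (card (count_upto (n -` E) N)) / real N) \<longlonglongrightarrow> 0"
proof -
  define g where "g m = real (card (count_upto E m)) / real m" for m
  have n_at_top: "filterlim n at_top sequentially"
    using n filterlim_subseq by blast
  have "(\<lambda>N. g (n N)) \<longlonglongrightarrow> 0"
    using filterlim_compose[OF E n_at_top] unfolding g_def .
  from tendsto_divide[OF tendsto_mult[OF this LIMSEQ_Suc_n_over_n] tendsto_const[of c]] c(1)
  have bound_lim: "(\<lambda>N. g (n N) * (real (Suc N) / real N) / c) \<longlonglongrightarrow> 0"
    by simp
  have range_ev: "eventually (\<lambda>N. c < real (Suc N) / real (n N)) sequentially"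
    using filterlim_iff[THEN iffD1, OF n_at_top, rule_format, OF c(2)]
    by (simp add: card_count_upto_range_at[OF n])
  show ?thesis
  proof (rule tendsto_sandwich[OF _ _ tendsto_const bound_lim])
    show "eventually (\<lambda>N. 0 \<le> real (card (count_upto (n -` E) N)) / real N) sequentially"
      by simp
    show "eventually (\<lambda>N. real (card (count_upto (n -` E) N)) / real N
        \<le> g (n N) * (real (Suc N) / real N) / c) sequentially"
      using range_ev eventually_gt_at_top[of 0]
    proof eventually_elim
      case (elim N)
      have "N \<le> n N" using n by (rule seq_suble)
      with elim have pos: "real (n N) > 0" by simp
      with elim c(1) have le: "real (n N) \<le> real (Suc N) / c"
        by (simp add: field_simps)
      have "real (card (count_upto (n -` E) N)) \<le> real (card (count_upto E (n N)))"
        using card_count_upto_vimage_le[OF n] by simp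
      also have "\<dots> = g (n N) * real (n N)"
        using pos unfolding g_def by simp
      also have "\<dots> \<le> g (n N) * (real (Suc N) / c)"
        using le by (rule mult_left_mono) (simp add: g_def)
      finally have "real (card (count_upto (n -` E) N)) / real N
          \<le> g (n N) * (real (Suc N) / c) / real N"
        by (rule divide_right_mono) simp
      then show ?case by (simp add: mult.commute)
    qed
  qed
qed

theorem lemma4:
  fixes x y :: "nat \<Rightarrow> 'a::metric_space"
    and K :: "nat set" and n :: "nat \<Rightarrow> nat"
  assumes "stat_equiv x y"
    and "infinite K"
    and "liminf (\<lambda>m. ereal (real (card (count_upto K m)) / real m)) > 0"
    and "strict_mono n"
    and "range n = K"
  shows "stat_equiv (\<lambda>k. x (n k)) (\<lambda>k. y (n k))"
proof -
  obtain M where M: "stat_dense M" "\<forall>k\<in>M. x k = y k"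
    using assms(1) stat_equiv_def by blast
  obtain c where "c > 0"
    and "eventually (\<lambda>m. c < real (card (count_upto (range n) m)) / real m) sequentially"
    using assms(3) unfolding assms(5)[symmetric] by (rule liminf_pos_imp_eventually_gt)
  with M(1) assms(4) have "stat_dense (n -` M)"
    using density_zero_vimage[of "-M" n c]
    by (simp add: stat_dense_iff_Compl_density_zero vimage_Compl)
  moreover have "\<forall>k\<in>n -` M. x (n k) = y (n k)"
    using M(2) by simp
  ultimately show ?thesis
    unfolding stat_equiv_def by blast
qed

end
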